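(* Let $\mathfrak m=\mathfrak m_{-1}\oplus\mathfrak m_{-2}$ be a non-degenerate graded nilpotent Lie algebra of depth $2$ over $\mathbb C$, generated by $\mathfrak m_{-1}$, with $\dim\mathfrak m_{-2}=2$. Then the Tanaka prolongation of $\mathfrak m$ is infinite-dimensional.
   Context: A GNLA is a negatively graded Lie algebra $\mathfrak m=\bigoplus_{i\ge1}\mathfrak m_{-i}$ generated by $\mathfrak m_{-1}$; non-degenerate means $\mathfrak m_{-1}$ contains no non-zero central element. The Tanaka prolongation $\mathfrak g(\mathfrak m)$ is defined by $\mathfrak g_i(\mathfrak m)=\mathfrak m_i$ for $i<0$ and recursively, for $k\ge0$, $\mathfrak g_k(\mathfrak m)=\{\phi:\mathfrak m\to\bigoplus_{i<k}\mathfrak g_i(\mathfrak m)\text{ linear}\mid \phi(\mathfrak m_{-i})\subset\mathfrak g_{k-i}(\mathfrak m),\ \phi([x,y])=[\phi(x),y]+[x,\phi(y)]\ \forall x,y\in\mathfrak m\}$. *)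

theory Defs
  imports Complex_Main
begin

text \<open>The Lie algebra m is the whole carrier type 'a, a complex vector space
  via the scalar multiplication scale; br is the Lie bracket; M1, M2 are the
  graded pieces m_{-1}, m_{-2}.\<close>

definition lie_algebra :: "(complex \<Rightarrow> 'a::ab_group_add \<Rightarrow> 'a) \<Rightarrow> ('a \<Rightarrow> 'a \<Rightarrow> 'a) \<Rightarrow> bool" where
  "lie_algebra scale br \<longleftrightarrow>
     vector_space scale \<and>
     (\<forall>x y z. br (x + y) z = br x z + br y z) \<and>
     (\<forall>x y z. br x (y + z) = br x y + br x z) \<and>
     (\<forall>c x y. br (scale c x) y = scale c (br x y)) \<and>
     (\<forall>c x y. br x (scale c y) = scale c (br x y)) \<and>
     (\<forall>x. br x x = 0) \<and>
     (\<forall>x y z. br x (br y z) + br y (br z x) + br z (br x y) = 0)"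

definition gnla_depth2 ::
  "(complex \<Rightarrow> 'a::ab_group_add \<Rightarrow> 'a) \<Rightarrow> ('a \<Rightarrow> 'a \<Rightarrow> 'a) \<Rightarrow> 'a set \<Rightarrow> 'a set \<Rightarrow> bool" where
  "gnla_depth2 scale br M1 M2 \<longleftrightarrow>
     lie_algebra scale br \<and>
     (\<exists>B. finite B \<and> module.span scale B = UNIV) \<and>
     module.subspace scale M1 \<and> module.subspace scale M2 \<and>
     M1 \<inter> M2 = {0} \<and> (\<forall>x. \<exists>a\<in>M1. \<exists>b\<in>M2. x = a + b) \<and>
     M2 \<noteq> {0} \<and>
     (\<forall>a\<in>M1. \<forall>b\<in>M1. br a b \<in> M2) \<and>
     (\<forall>a\<in>M1. \<forall>b\<in>M2. br a b = 0) \<and>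
     (\<forall>a\<in>M2. \<forall>b\<in>M1. br a b = 0) \<and>
     (\<forall>a\<in>M2. \<forall>b\<in>M2. br a b = 0) \<and>
     (\<forall>S. module.subspace scale S \<and> M1 \<subseteq> S \<and> (\<forall>x\<in>S. \<forall>y\<in>S. br x y \<in> S)
          \<longrightarrow> S = UNIV)"

definition nondegenerate :: "('a::zero \<Rightarrow> 'a \<Rightarrow> 'a) \<Rightarrow> 'a set \<Rightarrow> bool" where
  "nondegenerate br M1 \<longleftrightarrow> (\<forall>x\<in>M1. (\<forall>y. br x y = 0) \<longrightarrow> x = 0)"

text \<open>Uniform representation of elements of the graded pieces g_i(m):
  an element of g_i with i < 0 is Neg a with a in m_i; an element of g_k with
  k >= 0 is Pos phi, where phi x is the element of (+)_{i<k} g_i written as a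
  family indexed by the degree i (components of degree >= k are the junk value
  Neg 0).\<close>

datatype 'a tel = Neg 'a | Pos "'a \<Rightarrow> int \<Rightarrow> 'a tel"

primrec tadd :: "'a::plus tel \<Rightarrow> 'a::plus tel \<Rightarrow> 'a tel" where
  "tadd (Neg a) t = (case t of Neg b \<Rightarrow> Neg (a + b) | Pos _ \<Rightarrow> Neg undefined)"
| "tadd (Pos f) t = (case t of Pos g \<Rightarrow> Pos (\<lambda>x j. tadd (f x j) (g x j)) | Neg _ \<Rightarrow> Neg undefined)"

primrec tscale :: "(complex \<Rightarrow> 'a \<Rightarrow> 'a) \<Rightarrow> complex \<Rightarrow> 'a tel \<Rightarrow> 'a tel" where
  "tscale scale c (Neg a) = Neg (scale c a)"
| "tscale scale c (Pos f) = Pos (\<lambda>x j. tscale scale c (f x j))"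

text \<open>Canonical zero element of g_i.\<close>
primrec Znat :: "nat \<Rightarrow> int \<Rightarrow> 'a::zero tel" where
  "Znat 0 = (\<lambda>i. Neg 0)"
| "Znat (Suc n) = (\<lambda>i. if i = int n then Pos (\<lambda>x j. if j < i then Znat n j else Neg 0)
                      else Znat n i)"

definition Z :: "int \<Rightarrow> 'a::zero tel" where
  "Z i = Znat (nat i + 1) i"

text \<open>Bracket [u, y] of an element u of g_i with y in m, as a family over degrees.\<close>
definition brk :: "('a::zero \<Rightarrow> 'a \<Rightarrow> 'a) \<Rightarrow> int \<Rightarrow> 'a tel \<Rightarrow> 'a \<Rightarrow> int \<Rightarrow> 'a tel" where
  "brk br i t y = (case t of
      Neg a \<Rightarrow> (\<lambda>j. if j = -2 then Neg (br a y) else Z j)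
    | Pos \<psi> \<Rightarrow> (\<lambda>j. if j < i then \<psi> y j else Z j))"

definition famadd :: "(int \<Rightarrow> 'a::plus tel) \<Rightarrow> (int \<Rightarrow> 'a tel) \<Rightarrow> int \<Rightarrow> 'a tel" where
  "famadd u v = (\<lambda>j. tadd (u j) (v j))"

text \<open>Bracket [u, y] for u in (+)_{i<k} g_i (family u), y in m; the levels below
  -2 are zero, so the sum runs over i = -2 .. k-1.\<close>
definition brF :: "('a::{zero,plus} \<Rightarrow> 'a \<Rightarrow> 'a) \<Rightarrow> int \<Rightarrow> (int \<Rightarrow> 'a tel) \<Rightarrow> 'a \<Rightarrow> int \<Rightarrow> 'a tel" where
  "brF br k u y = foldr famadd (map (\<lambda>i. brk br i (u i) y) [-2..k-1]) Z"

definition Mdeg :: "'a set \<Rightarrow> 'a set \<Rightarrow> int \<Rightarrow> 'a::zero set" where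
  "Mdeg M1 M2 i = (if i = -1 then M1 else if i = -2 then M2 else {0})"

text \<open>Degree k piece, given the previously constructed pieces H i (i < k).\<close>
definition step ::
  "(complex \<Rightarrow> 'a::ab_group_add \<Rightarrow> 'a) \<Rightarrow> ('a \<Rightarrow> 'a \<Rightarrow> 'a) \<Rightarrow> 'a set \<Rightarrow> 'a set
    \<Rightarrow> (int \<Rightarrow> 'a tel set) \<Rightarrow> int \<Rightarrow> 'a tel set" where
  "step scale br M1 M2 H k = {Pos \<phi> | \<phi>.
      (\<forall>x j. j < k \<longrightarrow> \<phi> x j \<in> H j) \<and>
      (\<forall>x j. k \<le> j \<longrightarrow> \<phi> x j = Neg 0) \<and>
      (\<forall>x y j. \<phi> (x + y) j = tadd (\<phi> x j) (\<phi> y j)) \<and>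
      (\<forall>c x j. \<phi> (scale c x) j = tscale scale c (\<phi> x j)) \<and>
      (\<forall>l. \<forall>x \<in> Mdeg M1 M2 (-l). \<forall>j. j < k \<and> j \<noteq> k - l \<longrightarrow> \<phi> x j = Z j) \<and>
      (\<forall>x y j. j < k \<longrightarrow>
          \<phi> (br x y) j = tadd (brF br k (\<phi> x) y j) (tscale scale (-1) (brF br k (\<phi> y) x j)))}"

primrec Gnat ::
  "(complex \<Rightarrow> 'a::ab_group_add \<Rightarrow> 'a) \<Rightarrow> ('a \<Rightarrow> 'a \<Rightarrow> 'a) \<Rightarrow> 'a set \<Rightarrow> 'a set
    \<Rightarrow> nat \<Rightarrow> int \<Rightarrow> 'a tel set" where
  "Gnat scale br M1 M2 0 = (\<lambda>i. if i < 0 then Neg ` Mdeg M1 M2 i else {})"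
| "Gnat scale br M1 M2 (Suc n) = (\<lambda>i. if i = int n then step scale br M1 M2 (Gnat scale br M1 M2 n) (int n)
                                      else Gnat scale br M1 M2 n i)"

definition tanaka :: "(complex \<Rightarrow> 'a::ab_group_add \<Rightarrow> 'a) \<Rightarrow> ('a \<Rightarrow> 'a \<Rightarrow> 'a) \<Rightarrow> 'a set \<Rightarrow> 'a set
    \<Rightarrow> int \<Rightarrow> 'a tel set" where
  "tanaka scale br M1 M2 k = Gnat scale br M1 M2 (nat k + 1) k"

end

theory Submission
  imports Defs "Jordan_Normal_Form.Char_Poly"
begin

text \<open>
  Write m = m_{-1} (+) m_{-2} with dim m_{-2} = 2. Choosing coordinates on m_{-2},
  the bracket on m_{-1} is a pair of complex bilinear forms, and over the complex numbers the
  pencil they span contains a degenerate member. A vector v in its kernel satisfies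
  ad v = beta (.) w0 for a single w0 in m_{-2} and a 1-form beta, which is non-zero by
  non-degeneracy and vanishes on m_{-2} and on all brackets. For such a rank-one element v the
  elements c v (x) beta^n, defined recursively as derivations of m, belong to the Tanaka
  prolongation in degree n - 1 and are non-zero for c <> 0; so every degree k >= 0 is non-zero.
\<close>

lemma Znat_eq: "Znat n j = (if j < int n then Z j else Neg 0)"
proof (induction n arbitrary: j)
  case (Suc n)
  then show ?case by (cases "j = int n") (auto simp: Z_def)
qed (simp add: Z_def)

lemma Z_unfold: "Z j = (if j < 0 then Neg 0 else Pos (\<lambda>x i. if i < j then Z i else Neg 0))"
proof (cases "j < 0")
  case False
  then have "Z j = Pos (\<lambda>x i. if i < j then Znat (nat j) i else Neg 0)"
    by (simp add: Z_def)
  also have "\<dots> = Pos (\<lambda>x i. if i < j then Z i else Neg 0)"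
    using False by (intro arg_cong[where f=Pos] ext) (simp add: Znat_eq)
  finally show ?thesis using False by simp
qed (simp add: Z_def)

lemma Z_neg: "j < 0 \<Longrightarrow> Z j = Neg 0"
  by (subst Z_unfold) simp

lemma tadd_Z: "tadd (Z j) (Z j) = (Z j :: 'a::monoid_add tel)"
proof -
  have "tadd (Znat n j) (Znat n j) = (Znat n j :: 'a tel)" for n
    by (induction n arbitrary: j) (auto intro!: ext)
  then show ?thesis unfolding Z_def .
qed

lemma tscale_Z: "scale c 0 = 0 \<Longrightarrow> tscale scale c (Z j) = (Z j :: 'a::zero tel)"
proof -
  assume "scale c 0 = 0"
  then have "tscale scale c (Znat n j) = (Znat n j :: 'a tel)" for n
    by (induction n arbitrary: j) (auto intro!: ext)
  then show ?thesis unfolding Z_def .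
qed

lemma foldr_famadd_single:
  assumes "distinct xs" "p \<in> set xs"
    and "\<And>i. i \<in> set xs \<Longrightarrow> i \<noteq> p \<Longrightarrow> f i = Z"
    and "\<And>j. tadd (Z j) (f p j) = f p j" "\<And>j. tadd (f p j) (Z j) = (f p j :: 'a::monoid_add tel)"
  shows "foldr famadd (map f xs) Z = f p"
proof -
  have "foldr famadd (map f xs) Z = (if p \<in> set xs then f p else Z)"
    using assms(1,3)
  proof (induction xs)
    case (Cons a xs)
    show ?case
    proof (cases "a = p")
      case True
      then show ?thesis using Cons assms(5) by (auto simp: famadd_def)
    next
      case False
      then have "f a = Z" using Cons.prems by auto
      then show ?thesis using Cons False assms(4) by (auto simp: famadd_def tadd_Z)
    qed
  qed simp
  then show ?thesis using assms(2) by simp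
qed

lemma brk_Z:
  assumes "\<And>y. br 0 y = 0"
  shows "brk br i (Z i) y = (Z :: int \<Rightarrow> 'a::ab_group_add tel)"
proof
  fix j
  show "brk br i (Z i) y j = Z j"
  proof (cases "i < 0")
    case True
    then show ?thesis using assms by (auto simp: brk_def Z_neg)
  qed (subst Z_unfold, simp add: brk_def)
qed

text \<open>The element tower v beta n c represents c v (x) beta^n: for n = 0 it is c v in g_{-1};
  for n + 1 it lies in g_n and maps x to tower v beta n (c beta(x)) in degree n - 1, all other
  components being zero.\<close>
primrec tower :: "(complex \<Rightarrow> 'a::zero \<Rightarrow> 'a) \<Rightarrow> 'a \<Rightarrow> ('a \<Rightarrow> complex) \<Rightarrow> nat \<Rightarrow> complex \<Rightarrow> 'a tel"
  where
  "tower sc v \<beta> 0 c = Neg (sc c v)"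
| "tower sc v \<beta> (Suc n) c = Pos (\<lambda>x j. if j = int n - 1 then tower sc v \<beta> n (c * \<beta> x)
      else if j < int n then Z j else Neg 0)"

locale rank_one_tower = vector_space sc for sc :: "complex \<Rightarrow> 'a::ab_group_add \<Rightarrow> 'a" +
  fixes br :: "'a \<Rightarrow> 'a \<Rightarrow> 'a" and M1 M2 :: "'a set" and v w0 :: 'a and \<beta> :: "'a \<Rightarrow> complex"
  assumes br_scale_left: "br (sc c x) y = sc c (br x y)"
    and subspace_M1: "subspace M1" and subspace_M2: "subspace M2"
    and \<beta>_add: "\<beta> (x + y) = \<beta> x + \<beta> y"
    and \<beta>_scale: "\<beta> (sc c x) = c * \<beta> x"
    and \<beta>_M2: "x \<in> M2 \<Longrightarrow> \<beta> x = 0"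
    and \<beta>_br: "\<beta> (br x y) = 0"
    and ad_v: "br v y = sc (\<beta> y) w0"
    and v_M1: "v \<in> M1" and v_nonzero: "v \<noteq> 0"
    and \<beta>_nonzero: "\<exists>x. \<beta> x \<noteq> 0"
begin

abbreviation Y :: "nat \<Rightarrow> complex \<Rightarrow> 'a tel" where
  "Y \<equiv> tower sc v \<beta>"

lemma br_0_left: "br 0 y = 0"
  using br_scale_left[of 0] by simp

lemma \<beta>_0: "\<beta> 0 = 0"
  using \<beta>_scale[of 0 0] by simp

lemma Y_add: "tadd (Y n a) (Y n b) = Y n (a + b)"
  by (induction n arbitrary: a b) (auto intro!: ext simp: tadd_Z distrib_right scale_left_distrib)

lemma Y_scale: "tscale sc d (Y n a) = Y n (d * a)"
  by (induction n arbitrary: a) (auto intro!: ext simp: tscale_Z mult.assoc)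

lemma Y_zero: "Y n 0 = Z (int n - 1)"
proof (induction n)
  case 0
  then show ?case by (simp add: Z_neg)
next
  case (Suc n)
  then show ?case by (subst Z_unfold) (auto intro!: ext)
qed

lemma Y_nonzero: "c \<noteq> 0 \<Longrightarrow> Y n c \<noteq> Y n 0"
proof (induction n arbitrary: c)
  case 0
  then show ?case using v_nonzero by simp
next
  case (Suc n)
  obtain x where x: "\<beta> x \<noteq> 0" using \<beta>_nonzero by auto
  have "Y n (c * \<beta> x) \<noteq> Y n 0" using Suc x by simp
  then show ?case by (auto dest!: fun_cong[where x = x] fun_cong[where x = "int n - 1"])
qed

lemma brk_Y: "brk br (int m - 1) (Y m d) y =
   (\<lambda>j. if j = int m - 2 then (case m of 0 \<Rightarrow> Neg (br (sc d v) y) | Suc p \<Rightarrow> Y p (d * \<beta> y)) else Z j)"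
  by (cases m) (auto intro!: ext simp: brk_def)

lemma brk_Y_Z_neutral:
  "tadd (Z j) (brk br (int m - 1) (Y m d) y j) = brk br (int m - 1) (Y m d) y j \<and>
   tadd (brk br (int m - 1) (Y m d) y j) (Z j) = brk br (int m - 1) (Y m d) y j"
proof (cases "j = int m - 2")
  case True
  show ?thesis
  proof (cases m)
    case 0
    then show ?thesis using True by (simp add: brk_def Z_neg)
  next
    case (Suc p)
    then have "Z j = Y p 0" using True by (simp add: Y_zero)
    then show ?thesis using True Suc by (simp add: brk_def Y_add)
  qed
qed (simp add: brk_Y tadd_Z)

lemma brF_Y:
  assumes "\<And>i. i < int m \<Longrightarrow> i \<noteq> int m - 1 \<Longrightarrow> u i = Z i"
    and "u (int m - 1) = Y m d"
  shows "brF br (int m) u y = brk br (int m - 1) (Y m d) y"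
  unfolding brF_def
proof (subst foldr_famadd_single)
  fix i assume "i \<in> set [-2..int m - 1]" "i \<noteq> int m - 1"
  then show "brk br i (u i) y = Z" using assms(1) br_0_left by (simp add: brk_Z)
qed (use brk_Y_Z_neutral assms(2) in simp_all)

text \<open>The map underlying Y (m+1) c satisfies the derivation rule: both sides vanish, the bracket
  side because beta kills brackets, the other side because the two terms cancel by symmetry in x, y.\<close>
lemma Y_derivation:
  assumes \<phi>: "Y (Suc m) c = Pos \<phi>" and j: "j < int m"
  shows "\<phi> (br x y) j = tadd (brF br (int m) (\<phi> x) y j) (tscale sc (-1) (brF br (int m) (\<phi> y) x j))"
proof -
  have \<phi>_eq: "\<phi> = (\<lambda>x j. if j = int m - 1 then Y m (c * \<beta> x) else if j < int m then Z j else Neg 0)"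
    using \<phi> by simp
  have lhs: "\<phi> (br x y) j = Z j" using j by (simp add: \<phi>_eq \<beta>_br Y_zero)
  have brF_x: "brF br (int m) (\<phi> x) y = brk br (int m - 1) (Y m (c * \<beta> x)) y"
   and brF_y: "brF br (int m) (\<phi> y) x = brk br (int m - 1) (Y m (c * \<beta> y)) x"
    by (rule brF_Y; simp add: \<phi>_eq)+
  have "tadd (brk br (int m - 1) (Y m (c * \<beta> x)) y j)
      (tscale sc (-1) (brk br (int m - 1) (Y m (c * \<beta> y)) x j)) = Z j"
  proof (cases "j = int m - 2")
    case True
    show ?thesis
    proof (cases m)
      case 0
      have "sc (c * \<beta> x) (br v y) + sc (-1) (sc (c * \<beta> y) (br v x)) =
          sc (c * \<beta> x * \<beta> y + (-1) * (c * \<beta> y * \<beta> x)) w0"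
        by (simp only: ad_v scale_scale scale_left_distrib mult.assoc)
      also have "\<dots> = 0" by (simp add: algebra_simps)
      finally show ?thesis using True 0 by (simp add: brk_def br_scale_left Z_neg)
    next
      case (Suc p)
      have "c * \<beta> x * \<beta> y + - (c * \<beta> y * \<beta> x) = 0" by (simp add: algebra_simps)
      then show ?thesis using True Suc by (simp add: brk_def Y_scale Y_add Y_zero)
    qed
  qed (simp add: brk_Y tscale_Z tadd_Z)
  then show ?thesis using lhs brF_x brF_y by simp
qed

lemma Y_in_step:
  assumes Y_m: "\<And>c. Y m c \<in> Gnat sc br M1 M2 m (int m - 1)"
    and Z_m: "\<And>j. j < int m \<Longrightarrow> Z j \<in> Gnat sc br M1 M2 m j"
  shows "Y (Suc m) c \<in> step sc br M1 M2 (Gnat sc br M1 M2 m) (int m)"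
proof -
  define \<phi> where "\<phi> = (\<lambda>x j. if j = int m - 1 then Y m (c * \<beta> x) else if j < int m then Z j else Neg 0)"
  have \<phi>: "Y (Suc m) c = Pos \<phi>" by (simp add: \<phi>_def)
  have phi_values: "\<forall>x j. j < int m \<longrightarrow> \<phi> x j \<in> Gnat sc br M1 M2 m j"
    using Y_m Z_m by (simp add: \<phi>_def)
  have additive: "\<forall>x y j. \<phi> (x + y) j = tadd (\<phi> x j) (\<phi> y j)"
    by (simp add: \<phi>_def Y_add \<beta>_add tadd_Z distrib_left)
  have homogeneous: "\<forall>d x j. \<phi> (sc d x) j = tscale sc d (\<phi> x j)"
    by (simp add: \<phi>_def Y_scale \<beta>_scale tscale_Z mult.left_commute)
  have graded: "\<forall>l. \<forall>x \<in> Mdeg M1 M2 (-l). \<forall>j. j < int m \<and> j \<noteq> int m - l \<longrightarrow> \<phi> x j = Z j"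
  proof (intro allI ballI impI)
    fix l x j assume x: "x \<in> Mdeg M1 M2 (-l)" and j: "j < int m \<and> j \<noteq> int m - l"
    show "\<phi> x j = Z j"
    proof (cases "j = int m - 1")
      case True
      then have "\<beta> x = 0" using x j \<beta>_M2 \<beta>_0 by (auto simp: Mdeg_def split: if_splits)
      then show ?thesis using True by (simp add: \<phi>_def Y_zero)
    qed (use j in \<open>simp add: \<phi>_def\<close>)
  qed
  show ?thesis unfolding step_def
    using \<phi> phi_values additive homogeneous graded Y_derivation[OF \<phi>] by (auto simp: \<phi>_def)
qed

lemma Y_in_Gnat: "Y n c \<in> Gnat sc br M1 M2 n (int n - 1)"
proof -
  have "(\<forall>c. Y n c \<in> Gnat sc br M1 M2 n (int n - 1)) \<and> (\<forall>j < int n. Z j \<in> Gnat sc br M1 M2 n j)"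
  proof (induction n)
    case 0
    show ?case using subspace_scale[OF subspace_M1 v_M1] subspace_0[OF subspace_M1]
        subspace_0[OF subspace_M2] by (auto simp: Mdeg_def Z_neg)
  next
    case (Suc m)
    then have Y_Suc: "Y (Suc m) c \<in> Gnat sc br M1 M2 (Suc m) (int (Suc m) - 1)" for c
      using Y_in_step by simp
    moreover have "Z j \<in> Gnat sc br M1 M2 (Suc m) j" if "j < int (Suc m)" for j
    proof (cases "j = int m")
      case True
      then show ?thesis using Y_Suc[of 0] Y_zero[of "Suc m"] by simp
    qed (use Suc that in simp)
    ultimately show ?case by blast
  qed
  then show ?thesis by blast
qed

theorem tanaka_infinite: "infinite {k. \<exists>t \<in> tanaka sc br M1 M2 k. t \<noteq> Z k}"
proof (rule infinite_super)
  show "range int \<subseteq> {k. \<exists>t \<in> tanaka sc br M1 M2 k. t \<noteq> Z k}"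
  proof (intro subsetI CollectI, elim rangeE)
    fix k m assume k: "k = int m"
    have "Y (Suc m) 1 \<in> tanaka sc br M1 M2 (int m)"
      using Y_in_Gnat[of "Suc m" 1] by (simp add: tanaka_def del: tower.simps)
    moreover have "Y (Suc m) 1 \<noteq> Z (int m)"
      using Y_nonzero[of 1 "Suc m"] Y_zero[of "Suc m"] by (simp del: tower.simps)
    ultimately show "\<exists>t \<in> tanaka sc br M1 M2 k. t \<noteq> Z k" using k by blast
  qed
  show "infinite (range int)"
    by (rule range_inj_infinite) (simp add: inj_on_def)
qed

end

text \<open>A linear functional on a subspace M, given only through its values on M.\<close>
definition functional_on :: "('s::{plus,times} \<Rightarrow> 'a \<Rightarrow> 'a) \<Rightarrow> 'a set \<Rightarrow> ('a::plus \<Rightarrow> 's) \<Rightarrow> bool" where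
  "functional_on scale M p \<longleftrightarrow>
     (\<forall>z\<in>M. \<forall>z'\<in>M. p (z + z') = p z + p z') \<and> (\<forall>r. \<forall>z\<in>M. p (scale r z) = r * p z)"

context vector_space
begin

lemma functional_on_0:
  assumes "subspace M" "functional_on scale M p"
  shows "p 0 = 0"
  using assms subspace_0[OF assms(1)] unfolding functional_on_def
  by (metis mult_zero_left scale_zero_left)

lemma functional_on_sum:
  assumes "subspace M" "functional_on scale M p" "\<And>i. i \<in> I \<Longrightarrow> f i \<in> M"
  shows "p (sum f I) = (\<Sum>i\<in>I. p (f i))"
  using assms(3)
proof (induction I rule: infinite_finite_induct)
  case (insert i I)
  then have "sum f I \<in> M" using assms(1) by (auto intro: subspace_sum)
  then show ?case using insert assms(2) by (simp add: functional_on_def)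
qed (use functional_on_0[OF assms(1,2)] in auto)

lemma functional_on_combination:
  "functional_on scale M p \<Longrightarrow> functional_on scale M q \<Longrightarrow>
     functional_on scale M (\<lambda>z. s * p z + t * q z)"
  by (simp add: functional_on_def algebra_simps)

lemma dim2_coordinates:
  assumes "dim M = 2"
  obtains p1 p2 w1 w2 where "functional_on scale M p1" "functional_on scale M p2"
    "\<And>z. z \<in> M \<Longrightarrow> z = scale (p1 z) w1 + scale (p2 z) w2"
proof -
  obtain W where W: "W \<subseteq> M" "independent W" "M \<subseteq> span W" "card W = dim M"
    using basis_exists[of M] by metis
  then obtain w1 w2 where w12: "W = {w1, w2}" "w1 \<noteq> w2"
    using assms by (auto simp: card_2_iff)
  define p where "p w z = representation W z w" for w z
  have "functional_on scale M (p w)" for w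
    using W(3) by (auto simp: functional_on_def p_def representation_add[OF W(2)]
        representation_scale[OF W(2)] subset_iff)
  moreover have "z = scale (p w1 z) w1 + scale (p w2 z) w2" if "z \<in> M" for z
  proof -
    have "(\<Sum>b\<in>W. scale (representation W z b) b) = z"
      using sum_representation_eq[of W z W] W that w12 by auto
    then show ?thesis using w12 by (simp add: p_def)
  qed
  ultimately show ?thesis using that by blast
qed

lemma vanishing_combination_rank_one:
  assumes coord: "\<And>z. z \<in> M \<Longrightarrow> z = scale (p1 z) w1 + scale (p2 z) w2" and st: "s \<noteq> 0 \<or> t \<noteq> 0"
  obtains q w0 where "q \<in> {p1, p2}" "\<And>z. z \<in> M \<Longrightarrow> s * p1 z + t * p2 z = 0 \<Longrightarrow> z = scale (q z) w0"
proof (cases "t = 0")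
  case True
  have "z = scale (p2 z) w2" if "z \<in> M" "s * p1 z + t * p2 z = 0" for z
  proof -
    have "z = scale (p1 z) w1 + scale (p2 z) w2" by (rule coord[OF that(1)])
    also have "\<dots> = scale (p2 z) w2" using that(2) True st by simp
    finally show ?thesis .
  qed
  then show ?thesis using that[of p2 w2] by blast
next
  case False
  have "z = scale (p1 z) (w1 + scale (- (s / t)) w2)" if "z \<in> M" "s * p1 z + t * p2 z = 0" for z
  proof -
    have p2z: "p2 z = p1 z * (- (s / t))"
      using that(2) False by (simp add: field_simps add_eq_0_iff)
    have "z = scale (p1 z) w1 + scale (p2 z) w2" by (rule coord[OF that(1)])
    also have "\<dots> = scale (p1 z) w1 + scale (p1 z) (scale (- (s / t)) w2)"
      by (simp only: p2z scale_scale)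
    also have "\<dots> = scale (p1 z) (w1 + scale (- (s / t)) w2)"
      by (simp only: scale_right_distrib)
    finally show ?thesis .
  qed
  then show ?thesis using that[of p1] by blast
qed

lemma independent_list_combination:
  assumes "distinct es" "independent (set es)" "(\<Sum>i<length es. scale (c i) (es ! i)) = 0"
    and "i < length es"
  shows "c i = 0"
proof -
  have bij: "bij_betw (nth es) {..<length es} (set es)"
    using bij_betw_nth[OF assms(1)] by (simp add: lessThan_atLeast0)
  define u where "u b = c (the_inv_into {..<length es} (nth es) b)" for b
  have "(\<Sum>b\<in>set es. scale (u b) b) = (\<Sum>i<length es. scale (u (es ! i)) (es ! i))"
    using sum.reindex[of "nth es" "{..<length es}" "\<lambda>b. scale (u b) b"] bij
    by (simp add: bij_betw_def)
  also have "\<dots> = 0"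
    using bij assms(3) by (simp add: u_def bij_betw_def the_inv_into_f_f)
  finally have "u (es ! i) = 0"
    using independentD[OF assms(2) _ subset_refl] assms(4) by simp
  then show ?thesis using bij assms(4) by (simp add: u_def bij_betw_def the_inv_into_f_f)
qed

end

text \<open>Every pencil s A + t B of complex square matrices has a singular member: either B is
  singular, or B^{-1} A has an eigenvalue mu (fundamental theorem of algebra) and A - mu B is.\<close>
lemma matrix_pencil_kernel:
  fixes A B :: "complex mat"
  assumes A: "A \<in> carrier_mat n n" and B: "B \<in> carrier_mat n n" and n: "n > 0"
  shows "\<exists>c s t. c \<in> carrier_vec n \<and> c \<noteq> 0\<^sub>v n \<and> (s \<noteq> 0 \<or> t \<noteq> 0) \<and>
     s \<cdot>\<^sub>v (A *\<^sub>v c) + t \<cdot>\<^sub>v (B *\<^sub>v c) = 0\<^sub>v n"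
proof (cases "det B = 0")
  case True
  then obtain c where c: "c \<in> carrier_vec n" "c \<noteq> 0\<^sub>v n" "B *\<^sub>v c = 0\<^sub>v n"
    using det_0_iff_vec_prod_zero[OF B] by auto
  then show ?thesis using A by (intro exI[of _ c] exI[of _ 0] exI[of _ 1]) auto
next
  case False
  from det_non_zero_imp_unit[OF B this, of "()"]
  obtain Bi where Bi: "Bi \<in> carrier_mat n n" "B * Bi = 1\<^sub>m n"
    unfolding Units_def ring_mat_def by auto
  define C where "C = Bi * A"
  have C: "C \<in> carrier_mat n n" using Bi A by (simp add: C_def)
  have "\<not> constant (poly (char_poly C))"
    unfolding constant_degree using degree_monic_char_poly[OF C] n by simp
  from fundamental_theorem_of_algebra[OF this] obtain \<mu> where "poly (char_poly C) \<mu> = 0" by blast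
  then have "eigenvalue C \<mu>" using eigenvalue_root_char_poly[OF C] by simp
  then obtain x where x: "x \<in> carrier_vec n" "x \<noteq> 0\<^sub>v n" "C *\<^sub>v x = \<mu> \<cdot>\<^sub>v x"
    unfolding eigenvalue_def eigenvector_def using C by auto
  have BC: "B * C = A" unfolding C_def
    using Bi A B by (metis assoc_mult_mat left_mult_one_mat)
  have "A *\<^sub>v x = B *\<^sub>v (C *\<^sub>v x)" using BC B C x by (metis assoc_mult_mat_vec)
  also have "\<dots> = \<mu> \<cdot>\<^sub>v (B *\<^sub>v x)" using x B by (simp add: mult_mat_vec)
  finally have "1 \<cdot>\<^sub>v (A *\<^sub>v x) + (- \<mu>) \<cdot>\<^sub>v (B *\<^sub>v x) = 0\<^sub>v n"
    using B by (auto intro!: eq_vecI)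
  then show ?thesis using x by (intro exI[of _ x] exI[of _ 1] exI[of _ "-\<mu>"]) auto
qed

lemma pencil_degenerate_member:
  fixes a b :: "nat \<Rightarrow> nat \<Rightarrow> complex"
  assumes "n > 0"
  shows "\<exists>c s t. (\<exists>i<n. c i \<noteq> 0) \<and> (s \<noteq> 0 \<or> t \<noteq> 0) \<and>
     (\<forall>j<n. (\<Sum>i<n. c i * (s * a i j + t * b i j)) = 0)"
proof -
  define A where "A = mat n n (\<lambda>(j, i). a i j)"
  define B where "B = mat n n (\<lambda>(j, i). b i j)"
  obtain c s t where c: "c \<in> carrier_vec n" "c \<noteq> 0\<^sub>v n" "s \<noteq> 0 \<or> t \<noteq> 0"
      and ker: "s \<cdot>\<^sub>v (A *\<^sub>v c) + t \<cdot>\<^sub>v (B *\<^sub>v c) = 0\<^sub>v n"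
    using matrix_pencil_kernel[of A n B] assms by (auto simp: A_def B_def)
  have "\<exists>i<n. c $ i \<noteq> 0" using c(1,2) by (auto intro!: eq_vecI)
  moreover have "(\<Sum>i<n. c $ i * (s * a i j + t * b i j)) = 0" if j: "j < n" for j
  proof -
    have "(s \<cdot>\<^sub>v (A *\<^sub>v c) + t \<cdot>\<^sub>v (B *\<^sub>v c)) $ j = 0" using ker j by simp
    then show ?thesis using j c(1)
      by (simp add: A_def B_def scalar_prod_def lessThan_atLeast0 sum_distrib_left
          flip: sum.distrib) (simp add: algebra_simps)
  qed
  ultimately show ?thesis using c(3) by blast
qed

locale depth2_gnla =
  fixes sc :: "complex \<Rightarrow> 'a::ab_group_add \<Rightarrow> 'a" and br :: "'a \<Rightarrow> 'a \<Rightarrow> 'a"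
    and M1 M2 :: "'a set"
  assumes gnla: "gnla_depth2 sc br M1 M2"
begin

sublocale vector_space sc
  using gnla by (simp add: gnla_depth2_def lie_algebra_def)

lemma br_add_left: "br (x + y) z = br x z + br y z"
  and br_add_right: "br x (y + z) = br x y + br x z"
  and br_scale_left: "br (sc c x) y = sc c (br x y)"
  and br_scale_right: "br x (sc c y) = sc c (br x y)"
  using gnla by (simp_all add: gnla_depth2_def lie_algebra_def)

lemma br_0_left: "br 0 y = 0" and br_0_right: "br y 0 = 0"
  using br_scale_left[of 0] br_scale_right[of _ 0] by simp_all

lemma br_sum_left: "br (sum f I) y = (\<Sum>i\<in>I. br (f i) y)"
  by (induction I rule: infinite_finite_induct) (simp_all add: br_0_left br_add_left)

lemma subspace_M1: "subspace M1" and subspace_M2: "subspace M2"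
  and grading: "\<exists>a\<in>M1. \<exists>b\<in>M2. x = a + b"
  and M2_nonzero: "M2 \<noteq> {0}"
  and br_M1_M1: "a \<in> M1 \<Longrightarrow> b \<in> M1 \<Longrightarrow> br a b \<in> M2"
  and br_M1_M2: "a \<in> M1 \<Longrightarrow> b \<in> M2 \<Longrightarrow> br a b = 0"
  and generated: "subspace S \<Longrightarrow> M1 \<subseteq> S \<Longrightarrow> (\<forall>x\<in>S. \<forall>y\<in>S. br x y \<in> S) \<Longrightarrow> S = UNIV"
  using gnla by (simp_all add: gnla_depth2_def)

lemma br_M2_left:
  assumes "a \<in> M2"
  shows "br a y = 0"
proof -
  obtain a' b' where "a' \<in> M1" "b' \<in> M2" "y = a' + b'" using grading by blast
  then show ?thesis using gnla assms by (simp add: gnla_depth2_def br_add_right)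
qed

lemma br_in_M2: "br x y \<in> M2"
proof -
  obtain a b a' b' where ab: "a \<in> M1" "b \<in> M2" "x = a + b" "a' \<in> M1" "b' \<in> M2" "y = a' + b'"
    using grading by metis
  then have "br x y = br a a'"
    by (simp add: br_add_left br_add_right br_M1_M2 br_M2_left)
  then show ?thesis using ab by (simp add: br_M1_M1)
qed

text \<open>m_{-1} has a finite basis, which is non-empty since m_{-1} generates m and m_{-2} is not zero.\<close>
lemma M1_basis:
  obtains es where "distinct es" "es \<noteq> []" "set es \<subseteq> M1" "independent (set es)" "M1 \<subseteq> span (set es)"
proof -
  obtain E where E: "E \<subseteq> M1" "independent E" "M1 \<subseteq> span E" using basis_exists[of M1] by metis
  obtain Bf where "finite Bf" "span Bf = UNIV" using gnla by (auto simp: gnla_depth2_def)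
  then have "finite E" using independent_span_bound[OF _ E(2)] by simp
  then obtain es where es: "set es = E" "distinct es" using finite_distinct_list by blast
  have "es \<noteq> []"
  proof
    assume "es = []"
    then have "M1 \<subseteq> {0}" using E(3) es by simp
    then have "{0} = (UNIV :: 'a set)"
      by (intro generated) (auto simp: subspace_def br_0_left)
    then have "x = 0" for x :: 'a by (simp add: set_eq_iff)
    then show False using M2_nonzero subspace_0[OF subspace_M2] by blast
  qed
  then show ?thesis using that es E by blast
qed

text \<open>A linear functional on m_{-2} composed with ad v vanishes as soon as it vanishes on a
  spanning set of m_{-1}, since ad v kills m_{-2}.\<close>
lemma ad_functional_vanishes:
  assumes p: "functional_on sc M2 p" and v: "v \<in> M1"
    and E: "M1 \<subseteq> span E" "\<And>e. e \<in> E \<Longrightarrow> p (br v e) = 0"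
  shows "p (br v u) = 0"
proof -
  have "subspace {u. p (br v u) = 0}"
    using p functional_on_0[OF subspace_M2 p] br_in_M2
    by (simp add: subspace_def functional_on_def br_0_right br_add_right br_scale_right)
  then have "span E \<subseteq> {u. p (br v u) = 0}" using E(2) by (intro span_minimal) auto
  moreover obtain a b where "a \<in> M1" "b \<in> M2" "u = a + b" using grading by blast
  ultimately show ?thesis using E(1) v by (auto simp: br_add_right br_M1_M2)
qed

text \<open>Any pencil of two 2-forms on m_{-1} with values in m_{-2}, read through functionals p1, p2,
  contains a degenerate member: apply pencil_degenerate_member to the coefficient matrices in a
  basis of m_{-1} and extend the vanishing of the resulting form from the basis to all of m.\<close>
lemma degenerate_pencil_member:
  assumes p1: "functional_on sc M2 p1" and p2: "functional_on sc M2 p2"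
  obtains v s t where "v \<in> M1" "v \<noteq> 0" "s \<noteq> 0 \<or> t \<noteq> 0"
    "\<And>u. s * p1 (br v u) + t * p2 (br v u) = 0"
proof -
  obtain es where es: "distinct es" "es \<noteq> []" "set es \<subseteq> M1" "independent (set es)"
      "M1 \<subseteq> span (set es)"
    by (rule M1_basis)
  define n where "n = length es"
  have "n > 0" using es(2) by (simp add: n_def)
  from pencil_degenerate_member[OF this, of "\<lambda>i j. p1 (br (es ! i) (es ! j))"
      "\<lambda>i j. p2 (br (es ! i) (es ! j))"]
  obtain c s t where c: "\<exists>i<n. c i \<noteq> 0" "s \<noteq> 0 \<or> t \<noteq> 0"
      and ker: "\<And>j. j < n \<Longrightarrow>
        (\<Sum>i<n. c i * (s * p1 (br (es ! i) (es ! j)) + t * p2 (br (es ! i) (es ! j)))) = 0"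
    by blast
  define v where "v = (\<Sum>i<n. sc (c i) (es ! i))"
  define \<Omega> where "\<Omega> z = s * p1 z + t * p2 z" for z
  have \<Omega>: "functional_on sc M2 \<Omega>" unfolding \<Omega>_def using p1 p2 by (rule functional_on_combination)
  have v: "v \<in> M1" unfolding v_def using es(3) n_def
    by (auto intro!: subspace_sum[OF subspace_M1] subspace_scale[OF subspace_M1])
  have "v \<noteq> 0" using c(1) independent_list_combination[OF es(1,4)] by (auto simp: v_def n_def)
  moreover have "\<Omega> (br v e) = 0" if "e \<in> set es" for e
  proof -
    obtain j where j: "j < n" "e = es ! j" using \<open>e \<in> set es\<close> by (auto simp: in_set_conv_nth n_def)
    have "br v e = (\<Sum>i<n. sc (c i) (br (es ! i) e))"
      by (simp add: v_def br_sum_left br_scale_left)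
    also have "\<Omega> \<dots> = (\<Sum>i<n. \<Omega> (sc (c i) (br (es ! i) e)))"
      using \<Omega> br_in_M2 subspace_M2 by (simp add: functional_on_sum subspace_scale)
    finally have "\<Omega> (br v e) = (\<Sum>i<n. c i * \<Omega> (br (es ! i) e))"
      using \<Omega> br_in_M2 by (simp add: functional_on_def)
    then show ?thesis using ker[OF j(1)] j(2) by (simp add: \<Omega>_def)
  qed
  then have "\<And>u. \<Omega> (br v u) = 0" using ad_functional_vanishes[OF \<Omega> v es(5)] by blast
  ultimately show ?thesis using that[OF v _ c(2)] by (simp add: \<Omega>_def)
qed

text \<open>Since dim m_{-2} = 2, a degenerate member of the pencil of the two coordinate 2-forms gives a
  non-zero v in m_{-1} whose adjoint map has rank at most one: ad v = q(ad v) w0.\<close>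
lemma rank_one_bracket:
  assumes "dim M2 = 2"
  obtains v q w0 where "v \<in> M1" "v \<noteq> 0" "functional_on sc M2 q" "\<And>y. br v y = sc (q (br v y)) w0"
proof -
  obtain p1 p2 w1 w2 where p1: "functional_on sc M2 p1" and p2: "functional_on sc M2 p2"
      and coord: "\<And>z. z \<in> M2 \<Longrightarrow> z = sc (p1 z) w1 + sc (p2 z) w2"
    by (rule dim2_coordinates[OF assms]) blast
  obtain v s t where v: "v \<in> M1" "v \<noteq> 0" and st: "s \<noteq> 0 \<or> t \<noteq> 0"
      and ker: "\<And>u. s * p1 (br v u) + t * p2 (br v u) = 0"
    by (rule degenerate_pencil_member[OF p1 p2]) blast
  obtain q w0 where q: "q \<in> {p1, p2}" and w0: "\<And>z. z \<in> M2 \<Longrightarrow> s * p1 z + t * p2 z = 0 \<Longrightarrow> z = sc (q z) w0"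
    using vanishing_combination_rank_one[of M2, OF coord st] by metis
  show ?thesis
  proof (rule that[OF v])
    show "functional_on sc M2 q" using q p1 p2 by blast
    show "br v y = sc (q (br v y)) w0" for y using w0[OF br_in_M2 ker] .
  qed
qed

text \<open>Non-degeneracy makes the 1-form beta = q o ad v non-zero; it vanishes on m_{-2} and on all
  brackets because ad v kills m_{-2}, which contains every bracket.\<close>
lemma rank_one_tower_exists:
  assumes "nondegenerate br M1" "dim M2 = 2"
  obtains v w0 \<beta> where "rank_one_tower sc br M1 M2 v w0 \<beta>"
proof -
  obtain v q w0 where v: "v \<in> M1" "v \<noteq> 0" and q: "functional_on sc M2 q"
      and ad_v: "\<And>y. br v y = sc (q (br v y)) w0"
    by (rule rank_one_bracket[OF assms(2)]) blast
  define \<beta> where "\<beta> y = q (br v y)" for y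
  have q0: "q 0 = 0" using functional_on_0[OF subspace_M2 q] .
  have ad_v_\<beta>: "br v y = sc (\<beta> y) w0" for y unfolding \<beta>_def by (rule ad_v)
  have "\<exists>x. \<beta> x \<noteq> 0"
  proof (rule ccontr)
    assume "\<not> (\<exists>x. \<beta> x \<noteq> 0)"
    then have "br v y = 0" for y using ad_v_\<beta>[of y] by simp
    then show False using assms(1) v by (simp add: nondegenerate_def)
  qed
  moreover have "\<beta> (x + y) = \<beta> x + \<beta> y" "\<beta> (sc c x) = c * \<beta> x" for x y c
    using q br_in_M2 by (simp_all add: \<beta>_def functional_on_def br_add_right br_scale_right)
  moreover have "\<beta> x = 0" if "x \<in> M2" for x
    using that v q0 by (simp add: \<beta>_def br_M1_M2)
  moreover have "\<beta> (br x y) = 0" for x y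
    using v q0 br_in_M2 by (simp add: \<beta>_def br_M1_M2)
  ultimately have "rank_one_tower sc br M1 M2 v w0 \<beta>"
    using v ad_v_\<beta> subspace_M1 subspace_M2 br_scale_left
    by (intro rank_one_tower.intro vector_space_axioms rank_one_tower_axioms.intro) blast+
  then show ?thesis by (rule that)
qed

end

theorem theorem4:
  fixes scale :: "complex \<Rightarrow> 'a::ab_group_add \<Rightarrow> 'a"
    and br :: "'a \<Rightarrow> 'a \<Rightarrow> 'a"
    and M1 M2 :: "'a set"
  assumes "gnla_depth2 scale br M1 M2"
    and "nondegenerate br M1"
    and "vector_space.dim scale M2 = 2"
  shows "infinite {k. \<exists>t \<in> tanaka scale br M1 M2 k. t \<noteq> Z k}"
proof -
  interpret depth2_gnla scale br M1 M2
    using assms(1) by (rule depth2_gnla.intro)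
  obtain v w0 \<beta> where "rank_one_tower scale br M1 M2 v w0 \<beta>"
    using rank_one_tower_exists[OF assms(2,3)] by blast
  then show ?thesis by (rule rank_one_tower.tanaka_infinite)
qed

end
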